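(* Let $T\in\mathcal{L}(\mathcal{H})$ be an SD operator. Then for every integer $n\ge1$, $T$ is $n$-EP if and only if $T$ is $n$-normal.
   Context: $\mathcal{H}$ is a Hilbert space, $\mathcal{L}(\mathcal{H})$ the bounded operators on it. For $T$ with closed range, $T^\dagger$ is its Moore–Penrose inverse (unique solution of $TT^\dagger T=T$, $T^\dagger TT^\dagger=T^\dagger$, $(T^\dagger T)^*=T^\dagger T$, $(TT^\dagger)^*=TT^\dagger$). $T$ is SD if it has closed range and $T^*T^\dagger=T^\dagger T^*$. $T$ is $n$-EP if it has closed range and $T^nT^\dagger=T^\dagger T^n$. $T$ is $n$-normal if $T^nT^*=T^*T^n$. *)

theory Defs
  imports "HOL-Analysis.Analysis"
begin

text \<open>Complex Hilbert spaces: a Banach space (over the reals) with a compatible complex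
  scalar multiplication and a complex inner product (linear in the second argument,
  conjugate-linear in the first) inducing the norm.\<close>

class chilbert = banach +
  fixes scaleC :: "complex \<Rightarrow> 'a \<Rightarrow> 'a"
    and cinner :: "'a \<Rightarrow> 'a \<Rightarrow> complex"
  assumes scaleC_add_right: "scaleC c (x + y) = scaleC c x + scaleC c y"
    and scaleC_add_left: "scaleC (c + d) x = scaleC c x + scaleC d x"
    and scaleC_scaleC: "scaleC c (scaleC d x) = scaleC (c * d) x"
    and scaleC_one: "scaleC 1 x = x"
    and scaleC_of_real: "scaleC (complex_of_real r) x = scaleR r x"
    and cinner_commute: "cinner x y = cnj (cinner y x)"
    and cinner_add_right: "cinner x (y + z) = cinner x y + cinner x z"
    and cinner_scaleC_right: "cinner x (scaleC c y) = c * cinner x y"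
    and cinner_self_nonneg: "0 \<le> Re (cinner x x)"
    and norm_cinner: "norm x = sqrt (Re (cinner x x))"

definition bounded_clin :: "('a::chilbert \<Rightarrow> 'a) \<Rightarrow> bool" where
  "bounded_clin T \<longleftrightarrow> bounded_linear T \<and> (\<forall>c x. T (scaleC c x) = scaleC c (T x))"

definition adj :: "('a::chilbert \<Rightarrow> 'a) \<Rightarrow> ('a \<Rightarrow> 'a)" where
  "adj T = (THE S. bounded_clin S \<and> (\<forall>x y. cinner (T x) y = cinner x (S y)))"

text \<open>Moore--Penrose inverse (meaningful for bounded operators with closed range).\<close>
definition mp_inv :: "('a::chilbert \<Rightarrow> 'a) \<Rightarrow> ('a \<Rightarrow> 'a)" where
  "mp_inv T = (THE S. bounded_clin S \<and> T \<circ> S \<circ> T = T \<and> S \<circ> T \<circ> S = S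
      \<and> adj (S \<circ> T) = S \<circ> T \<and> adj (T \<circ> S) = T \<circ> S)"

definition SD :: "('a::chilbert \<Rightarrow> 'a) \<Rightarrow> bool" where
  "SD T \<longleftrightarrow> closed (range T) \<and> adj T \<circ> mp_inv T = mp_inv T \<circ> adj T"

definition n_EP :: "nat \<Rightarrow> ('a::chilbert \<Rightarrow> 'a) \<Rightarrow> bool" where
  "n_EP n T \<longleftrightarrow> closed (range T) \<and> (T ^^ n) \<circ> mp_inv T = mp_inv T \<circ> (T ^^ n)"

definition n_normal :: "nat \<Rightarrow> ('a::chilbert \<Rightarrow> 'a) \<Rightarrow> bool" where
  "n_normal n T \<longleftrightarrow> (T ^^ n) \<circ> adj T = adj T \<circ> (T ^^ n)"

end

theory Submission
  imports Defs
begin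

(* Write A for T, A* for its adjoint and A+ for its Moore-Penrose inverse. Taking adjoints of
   the Penrose equations gives (A+)* A* = A A+ and A* (A+)* = A+ A, and taking adjoints of the SD
   identity A* A+ = A+ A* shows that (A+)* commutes with A. Hence, for every k,
     A A* A^k (A A+) = A A* A^k (A+)* A* = A A* (A+)* A^k A* = A A+ A^(k+1) A* = A^(k+1) A*.
   If A^n commutes with A+ and n >= 1, then A^n A A+ = A A+ A^n = A^n, so A A* A^n = A^(n+1) A*;
   multiplying by A+ on the left and using A+ A A* = A* and A+ A^n = A^n A+ gives A* A^n = A^n A*.
   Conversely, if A^n commutes with A*, the factorisations A+ = A* (A+)* A+ = A+ (A+)* A* show
   that A^n A+ and A+ A^n both equal A+ A^(n+1) A+.
   The algebra needs A* and a bounded A+ to exist: A* comes from the Riesz representation theorem,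
   and A+ from the projection theorem together with the bounded inverse theorem on the closed
   range of A, which rests on the Baire category theorem. *)

section \<open>Complex inner product\<close>

lemma cinner_add_left: "cinner (x + y) z = cinner x z + cinner y z"
  by (metis cinner_add_right cinner_commute complex_cnj_add)

lemma cinner_scaleC_left: "cinner (scaleC c x) y = cnj c * cinner x y"
  by (metis cinner_commute cinner_scaleC_right complex_cnj_mult)

lemma cinner_zero_right [simp]: "cinner x 0 = 0"
  using cinner_add_right[of x 0 0] by simp

lemma cinner_zero_left [simp]: "cinner 0 x = 0"
  using cinner_add_left[of 0 0 x] by simp

lemma cinner_diff_right: "cinner x (y - z) = cinner x y - cinner x z"
  by (metis cinner_add_right diff_add_cancel eq_diff_eq)

lemma cinner_diff_left: "cinner (x - y) z = cinner x z - cinner y z"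
  by (metis cinner_add_left diff_add_cancel eq_diff_eq)

lemma cinner_scaleR_left: "cinner (scaleR r x) y = of_real r * cinner x y"
  by (simp add: scaleC_of_real[symmetric] cinner_scaleC_left)

lemma cinner_scaleR_right: "cinner x (scaleR r y) = of_real r * cinner x y"
  by (simp add: scaleC_of_real[symmetric] cinner_scaleC_right)

lemma cinner_self: "cinner x x = of_real ((norm x)\<^sup>2)"
proof -
  have "Im (cinner x x) = 0"
    using arg_cong[OF cinner_commute[of x x], of Im] by simp
  then show ?thesis
    by (simp add: complex_eq_iff norm_cinner cinner_self_nonneg)
qed

lemma Re_cinner_self: "Re (cinner x x) = (norm x)\<^sup>2"
  by (simp add: cinner_self)

lemma cinner_self_eq_0 [simp]: "cinner x x = 0 \<longleftrightarrow> x = 0"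
  by (simp add: cinner_self)

lemma Re_cinner_commute: "Re (cinner y x) = Re (cinner x y)"
  by (subst cinner_commute) simp

lemma cinner_eq_0_commute: "cinner x y = 0 \<longleftrightarrow> cinner y x = 0"
  by (metis cinner_commute complex_cnj_zero_iff)

lemma scaleC_zero_right [simp]: "scaleC c 0 = 0"
  using scaleC_add_right[of c 0 0] by simp

lemma scaleC_diff_right: "scaleC c (x - y) = scaleC c x - scaleC c y"
  by (metis scaleC_add_right diff_add_cancel eq_diff_eq)

lemma cinner_ext: "(\<And>x. cinner x u = cinner x v) \<Longrightarrow> u = v"
  by (metis cinner_diff_right cinner_self_eq_0 diff_eq_eq diff_self)

lemma norm_scaleC: "norm (scaleC c x) = cmod c * norm x"
proof -
  have "cinner (scaleC c x) (scaleC c x) = (c * cnj c) * cinner x x"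
    by (simp add: cinner_scaleC_left cinner_scaleC_right mult_ac)
  then have "(norm (scaleC c x))\<^sup>2 = (cmod c * norm x)\<^sup>2"
    unfolding cinner_self complex_norm_square[symmetric] of_real_power[symmetric]
      of_real_mult[symmetric] of_real_eq_iff
    by (simp add: power_mult_distrib)
  then show ?thesis
    by (simp add: power2_eq_iff_nonneg)
qed

lemma norm_diff_scaleR_sq:
  "(norm (w - scaleR t k))\<^sup>2 = (norm w)\<^sup>2 - 2 * t * Re (cinner k w) + t\<^sup>2 * (norm k)\<^sup>2"
proof -
  have "cinner (w - scaleR t k) (w - scaleR t k) = cinner w w - of_real t * cinner w k
      - of_real t * cinner k w + of_real t * of_real t * cinner k k"
    by (simp add: cinner_diff_left cinner_diff_right cinner_scaleR_left cinner_scaleR_right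
        algebra_simps)
  from arg_cong[OF this, of Re] show ?thesis
    by (simp add: Re_cinner_self Re_cinner_commute[of w k] power2_eq_square)
qed

lemma Re_cinner_le: "Re (cinner a b) \<le> norm a * norm b"
proof -
  have "0 \<le> (norm (scaleR (norm b) a - scaleR (norm a) b))\<^sup>2"
    by simp
  also have "\<dots> = 2 * (norm a)\<^sup>2 * (norm b)\<^sup>2 - 2 * norm a * norm b * Re (cinner a b)"
    by (simp only: norm_diff_scaleR_sq)
      (simp add: cinner_scaleR_right Re_cinner_commute[of b a] power2_eq_square)
  finally have "norm a * norm b * Re (cinner a b) \<le> norm a * norm b * (norm a * norm b)"
    by (simp add: power2_eq_square algebra_simps)
  then show ?thesis
    by (cases "norm a * norm b = 0") (auto simp: mult_le_cancel_left)
qed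

lemma cinner_Cauchy_Schwarz: "cmod (cinner a b) \<le> norm a * norm b"
proof (cases "cinner a b = 0")
  case False
  define u where "u = cinner a b / of_real (cmod (cinner a b))"
  have "cnj u * cinner a b = of_real ((cmod (cinner a b))\<^sup>2) / of_real (cmod (cinner a b))"
    by (simp add: u_def complex_norm_square[symmetric] mult.commute del: of_real_power)
  then have "cmod (cinner a b) = Re (cinner (scaleC u a) b)"
    using False by (simp add: cinner_scaleC_left power2_eq_square)
  also have "\<dots> \<le> norm (scaleC u a) * norm b"
    by (rule Re_cinner_le)
  finally show ?thesis
    using False by (simp add: norm_scaleC u_def norm_divide)
qed simp

lemma parallelogram_law:
  fixes a b :: "'a::chilbert"
  shows "(norm (a + b))\<^sup>2 + (norm (a - b))\<^sup>2 = 2 * (norm a)\<^sup>2 + 2 * (norm b)\<^sup>2"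
proof -
  have "cinner (a + b) (a + b) + cinner (a - b) (a - b) = 2 * cinner a a + 2 * cinner b b"
    by (simp add: cinner_add_left cinner_add_right cinner_diff_left cinner_diff_right
        algebra_simps)
  from arg_cong[OF this, of Re] show ?thesis
    by (simp add: Re_cinner_self)
qed

lemma pythagoras:
  fixes a b :: "'a::chilbert"
  assumes "cinner a b = 0"
  shows "(norm (a + b))\<^sup>2 = (norm a)\<^sup>2 + (norm b)\<^sup>2"
proof -
  have "cinner (a + b) (a + b) = cinner a a + cinner b b"
    using assms cinner_eq_0_commute[of a b] by (simp add: cinner_add_left cinner_add_right)
  from arg_cong[OF this, of Re] show ?thesis
    by (simp add: Re_cinner_self)
qed

lemma norm_le_norm_add_if_orthogonal:
  fixes a b :: "'a::chilbert"
  assumes "cinner a b = 0"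
  shows "norm a \<le> norm (a + b)"
  using pythagoras[OF assms] by (simp add: power2_le_imp_le)

section \<open>Orthogonal projection onto closed subspaces\<close>

definition csubspace :: "'a::chilbert set \<Rightarrow> bool" where
  "csubspace M \<longleftrightarrow> 0 \<in> M \<and> (\<forall>x\<in>M. \<forall>y\<in>M. x + y \<in> M) \<and> (\<forall>c. \<forall>x\<in>M. scaleC c x \<in> M)"

lemma csubspace_scaleR: "csubspace M \<Longrightarrow> x \<in> M \<Longrightarrow> scaleR r x \<in> M"
  by (metis csubspace_def scaleC_of_real)

lemma csubspace_convex: "csubspace M \<Longrightarrow> convex M"
  unfolding convex_def by (simp add: csubspace_scaleR csubspace_def)

lemma convex_norm_diff_sq_le:
  fixes z :: "'a::chilbert"
  assumes "convex M" "a \<in> M" "b \<in> M"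
  shows "(norm (a - b))\<^sup>2 \<le> 2 * (norm (z - a))\<^sup>2 + 2 * (norm (z - b))\<^sup>2 - 4 * (infdist z M)\<^sup>2"
proof -
  define w where "w = z - (scaleR (1/2) a + scaleR (1/2) b)"
  have "scaleR (1/2) a + scaleR (1/2) b \<in> M"
    using assms by (intro convexD) auto
  then have "infdist z M \<le> norm w"
    unfolding w_def dist_norm[symmetric] by (rule infdist_le)
  moreover have "(z - a) + (z - b) = scaleR 2 w"
    by (simp add: w_def scaleR_diff_right scaleR_add_right scaleR_2)
  ultimately have "2 * infdist z M \<le> norm ((z - a) + (z - b))"
    by simp
  then have "(2 * infdist z M)\<^sup>2 \<le> (norm ((z - a) + (z - b)))\<^sup>2"
    by (rule power_mono) (simp add: infdist_nonneg)
  moreover have "norm ((z - a) - (z - b)) = norm (a - b)"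
    by (simp add: norm_minus_commute)
  ultimately show ?thesis
    using parallelogram_law[of "z - a" "z - b"] by (simp add: power_mult_distrib)
qed

lemma minimizing_sequence_Cauchy:
  fixes z :: "'a::chilbert"
  assumes "convex M" and ks: "\<And>n. ks n \<in> M"
    and lim: "(\<lambda>n. norm (z - ks n)) \<longlonglongrightarrow> infdist z M"
  shows "Cauchy ks"
proof (rule metric_CauchyI)
  fix e :: real
  assume "0 < e"
  define f where "f n = (norm (z - ks n))\<^sup>2 - (infdist z M)\<^sup>2" for n
  have "f \<longlonglongrightarrow> (infdist z M)\<^sup>2 - (infdist z M)\<^sup>2"
    unfolding f_def by (intro tendsto_intros lim)
  then obtain N where N: "\<And>n. n \<ge> N \<Longrightarrow> \<bar>f n\<bar> < e\<^sup>2 / 4"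
    using LIMSEQ_D[of f 0 "e\<^sup>2 / 4"] \<open>0 < e\<close> by auto
  have "dist (ks m) (ks n) < e" if "m \<ge> N" "n \<ge> N" for m n
  proof -
    have "(norm (ks m - ks n))\<^sup>2 \<le> 2 * f m + 2 * f n"
      using convex_norm_diff_sq_le[OF assms(1) ks ks, of m n z] by (simp add: f_def)
    also have "\<dots> < e\<^sup>2"
      using N[OF that(1)] N[OF that(2)] by linarith
    finally show ?thesis
      using \<open>0 < e\<close> by (simp add: dist_norm power_less_imp_less_base)
  qed
  then show "\<exists>N. \<forall>m\<ge>N. \<forall>n\<ge>N. dist (ks m) (ks n) < e"
    by blast
qed

lemma nearest_point_exists:
  fixes z :: "'a::chilbert"
  assumes "closed M" "convex M" "M \<noteq> {}"
  shows "\<exists>m\<in>M. norm (z - m) = infdist z M"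
proof -
  define d where "d = infdist z M"
  have "\<exists>k\<in>M. norm (z - k) < d + inverse (Suc n)" for n
  proof -
    have "(INF k\<in>M. dist z k) < d + inverse (Suc n)"
      using assms(3) by (simp add: d_def infdist_notempty del: dist_norm)
    moreover have "bdd_below (dist z ` M)"
      by (rule bdd_below_image_dist)
    ultimately show ?thesis
      using assms(3) by (auto simp: cINF_less_iff dist_norm)
  qed
  then obtain ks where ks: "\<And>n. ks n \<in> M" and ks_lt: "\<And>n. norm (z - ks n) < d + inverse (Suc n)"
    by metis
  have lim: "(\<lambda>n. norm (z - ks n)) \<longlonglongrightarrow> d"
  proof (rule real_tendsto_sandwich)
    have "d \<le> norm (z - ks n)" for n
      using infdist_le[OF ks, of z n] by (simp add: d_def dist_norm)
    then show "\<forall>\<^sub>F n in sequentially. d \<le> norm (z - ks n)"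
      by simp
    show "\<forall>\<^sub>F n in sequentially. norm (z - ks n) \<le> d + inverse (Suc n)"
      using ks_lt by (simp add: less_imp_le)
    show "(\<lambda>n. d + inverse (real (Suc n))) \<longlonglongrightarrow> d"
      using tendsto_add[OF tendsto_const LIMSEQ_inverse_real_of_nat] by simp
  qed simp
  obtain L where L: "ks \<longlonglongrightarrow> L"
    using minimizing_sequence_Cauchy[OF assms(2) ks lim[unfolded d_def]]
    by (auto simp: Cauchy_convergent_iff convergent_def)
  have "L \<in> M"
    using closed_sequentially[OF assms(1)] ks L by blast
  moreover have "(\<lambda>n. norm (z - ks n)) \<longlonglongrightarrow> norm (z - L)"
    by (intro tendsto_intros L)
  ultimately show ?thesis
    using LIMSEQ_unique[OF _ lim] d_def by blast
qed

lemma real_linear_le_quadratic_imp_zero: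
  fixes r s :: real
  assumes "\<And>t. 2 * t * r \<le> t\<^sup>2 * s" "0 \<le> s"
  shows "r = 0"
proof -
  define u where "u = r / (s + 1)"
  have r: "r = u * (s + 1)"
    using assms(2) by (simp add: u_def)
  have "2 * u * r \<le> u\<^sup>2 * s"
    by (rule assms(1))
  also have "\<dots> \<le> u\<^sup>2 * (s + 1)"
    by (simp add: mult_left_mono)
  also have "\<dots> = u * r"
    by (simp add: r power2_eq_square)
  finally have "u\<^sup>2 * (s + 1) \<le> 0"
    by (simp add: r power2_eq_square)
  then have "u = 0"
    using assms(2) by (smt (verit) mult_pos_pos zero_less_power2)
  then show ?thesis
    by (simp add: r)
qed

lemma nearest_point_orthogonal:
  fixes z :: "'a::chilbert"
  assumes M: "csubspace M" and "m \<in> M" and nearest: "\<And>k. k \<in> M \<Longrightarrow> norm (z - m) \<le> norm (z - k)"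
    and "k \<in> M"
  shows "cinner k (z - m) = 0"
proof -
  have Re0: "Re (cinner k' (z - m)) = 0" if "k' \<in> M" for k'
  proof (rule real_linear_le_quadratic_imp_zero)
    fix t :: real
    have "scaleR t k' \<in> M"
      by (rule csubspace_scaleR[OF M that])
    then have "m + scaleR t k' \<in> M"
      using M \<open>m \<in> M\<close> by (simp add: csubspace_def)
    then have "norm (z - m) \<le> norm ((z - m) - scaleR t k')"
      using nearest by (simp add: diff_diff_eq)
    then have "(norm (z - m))\<^sup>2 \<le> (norm ((z - m) - scaleR t k'))\<^sup>2"
      by (simp add: power_mono)
    then show "2 * t * Re (cinner k' (z - m)) \<le> t\<^sup>2 * (norm k')\<^sup>2"
      by (simp add: norm_diff_scaleR_sq)
  qed simp
  have "Re (cinner (scaleC \<i> k) (z - m)) = 0"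
    using Re0 M \<open>k \<in> M\<close> by (simp add: csubspace_def)
  then show ?thesis
    using Re0[OF \<open>k \<in> M\<close>] by (simp add: cinner_scaleC_left complex_eq_iff)
qed

lemma orthogonal_projection_exists:
  fixes z :: "'a::chilbert"
  assumes "closed M" "csubspace M"
  shows "\<exists>m\<in>M. \<forall>k\<in>M. cinner k (z - m) = 0"
proof -
  have "M \<noteq> {}"
    using assms(2) by (auto simp: csubspace_def)
  then obtain m where "m \<in> M" "norm (z - m) = infdist z M"
    using nearest_point_exists[OF assms(1) csubspace_convex[OF assms(2)]] by blast
  then show ?thesis
    using nearest_point_orthogonal[OF assms(2)] infdist_le by (metis dist_norm)
qed

section \<open>Riesz representation and adjoints\<close>

lemma bounded_linear_cinner_right: "bounded_linear (cinner y)"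
proof (rule bounded_linear_intro[where K = "norm y"])
  show "cinner y (scaleR r a) = scaleR r (cinner y a)" for r a
    by (simp add: cinner_scaleR_right scaleR_conv_of_real)
  show "norm (cinner y a) \<le> norm a * norm y" for a
    using cinner_Cauchy_Schwarz[of y a] by (simp add: mult.commute)
qed (rule cinner_add_right)

lemma bounded_clinI:
  fixes S :: "'a::chilbert \<Rightarrow> 'a"
  assumes "\<And>x y. S (x + y) = S x + S y" "\<And>c x. S (scaleC c x) = scaleC c (S x)"
    and "\<And>x. norm (S x) \<le> norm x * K"
  shows "bounded_clin S"
proof -
  have "bounded_linear S"
  proof (rule bounded_linear_intro[where K = K])
    show "S (scaleR r x) = scaleR r (S x)" for r x
      using assms(2)[of "of_real r" x] by (simp only: scaleC_of_real)
  qed (use assms(1,3) in auto)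
  then show ?thesis
    using assms(2) by (simp add: bounded_clin_def)
qed

lemma bounded_clin_comp: "bounded_clin A \<Longrightarrow> bounded_clin B \<Longrightarrow> bounded_clin (A \<circ> B)"
  unfolding bounded_clin_def comp_def by (auto intro: bounded_linear_compose)

lemma bounded_clin_scaleC: "bounded_clin A \<Longrightarrow> A (scaleC c x) = scaleC c (A x)"
  by (simp add: bounded_clin_def)

lemma riesz_representation:
  fixes f :: "'a::chilbert \<Rightarrow> complex"
  assumes f: "bounded_linear f" and hom: "\<And>c x. f (scaleC c x) = c * f x"
  shows "\<exists>w. \<forall>x. f x = cinner w x"
proof (cases "\<forall>x. f x = 0")
  case False
  interpret f: bounded_linear f
    by (rule f)
  obtain z where "f z \<noteq> 0"
    using False by blast
  define K where "K = {x. f x = 0}"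
  have "closed K"
    unfolding K_def by (intro closed_Collect_eq continuous_intros f.continuous_on)
  moreover have "csubspace K"
    unfolding csubspace_def K_def by (auto simp: f.add hom)
  ultimately obtain m where "m \<in> K" and perp: "\<And>k. k \<in> K \<Longrightarrow> cinner k (z - m) = 0"
    using orthogonal_projection_exists by blast
  define w where "w = z - m"
  have fw: "f w \<noteq> 0"
    using \<open>m \<in> K\<close> \<open>f z \<noteq> 0\<close> by (simp add: w_def f.diff K_def)
  then have "cinner w w \<noteq> 0"
    by auto
  have "f x = cinner (scaleC (cnj (f w / cinner w w)) w) x" for x
  proof -
    have "x - scaleC (f x / f w) w \<in> K"
      using fw by (simp add: K_def f.diff hom)
    then have "cinner w (x - scaleC (f x / f w) w) = 0"
      using perp cinner_eq_0_commute w_def by blast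
    then have "cinner w x = (f x / f w) * cinner w w"
      by (simp add: cinner_diff_right cinner_scaleC_right)
    then show ?thesis
      using \<open>cinner w w \<noteq> 0\<close> fw by (simp add: cinner_scaleC_left field_simps)
  qed
  then show ?thesis
    by blast
qed (auto intro: exI[of _ 0])

definition is_adjoint :: "('a::chilbert \<Rightarrow> 'a) \<Rightarrow> ('a \<Rightarrow> 'a) \<Rightarrow> bool" where
  "is_adjoint T S \<longleftrightarrow> (\<forall>x y. cinner (T x) y = cinner x (S y))"

lemma is_adjoint_unique: "is_adjoint T S1 \<Longrightarrow> is_adjoint T S2 \<Longrightarrow> S1 = S2"
  unfolding is_adjoint_def by (metis cinner_ext ext)

lemma adjoint_exists:
  fixes T :: "'a::chilbert \<Rightarrow> 'a"
  assumes T: "bounded_clin T"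
  shows "\<exists>S. bounded_clin S \<and> is_adjoint T S"
proof -
  interpret T: bounded_linear T
    using T by (simp add: bounded_clin_def)
  have "\<exists>w. \<forall>x. cinner y (T x) = cinner w x" for y
    by (rule riesz_representation)
      (simp_all add: bounded_linear_compose[OF bounded_linear_cinner_right T.bounded_linear_axioms]
        bounded_clin_scaleC[OF T] cinner_scaleC_right)
  then obtain S where S: "\<And>y x. cinner y (T x) = cinner (S y) x"
    by metis
  then have adjoint: "cinner (T x) y = cinner x (S y)" for x y
    by (metis cinner_commute)
  obtain K where "K > 0" and K: "\<And>x. norm (T x) \<le> norm x * K"
    using T.pos_bounded by blast
  have "bounded_clin S"
  proof (rule bounded_clinI[where K = K])
    show "S (a + b) = S a + S b" for a b
      by (rule cinner_ext) (simp add: adjoint[symmetric] cinner_add_right)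
    show "S (scaleC c a) = scaleC c (S a)" for c a
      by (rule cinner_ext) (simp add: adjoint[symmetric] cinner_scaleC_right)
    show "norm (S y) \<le> norm y * K" for y
    proof -
      have "(norm (S y))\<^sup>2 = Re (cinner (T (S y)) y)"
        by (simp add: adjoint Re_cinner_self)
      also have "\<dots> \<le> norm (T (S y)) * norm y"
        by (rule Re_cinner_le)
      also have "\<dots> \<le> norm (S y) * K * norm y"
        using K by (intro mult_right_mono) auto
      finally have "norm (S y) * norm (S y) \<le> norm (S y) * (norm y * K)"
        by (simp add: power2_eq_square mult_ac)
      then show ?thesis
        using \<open>K > 0\<close> by (cases "norm (S y) = 0") (auto simp: mult_le_cancel_left)
    qed
  qed
  then show ?thesis
    using adjoint by (auto simp: is_adjoint_def)
qed

lemma adj_eqI: "bounded_clin S \<Longrightarrow> is_adjoint T S \<Longrightarrow> adj T = S"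
  unfolding adj_def is_adjoint_def[symmetric]
  by (rule the_equality) (auto intro: is_adjoint_unique)

lemma
  assumes "bounded_clin T"
  shows bounded_clin_adj: "bounded_clin (adj T)"
    and cinner_adj_right: "cinner (T x) y = cinner x (adj T y)"
  using adjoint_exists[OF assms] adj_eqI is_adjoint_def by metis+

lemma cinner_adj_left: "bounded_clin T \<Longrightarrow> cinner (adj T x) y = cinner x (T y)"
  by (metis cinner_adj_right cinner_commute)

lemma adj_adj: "bounded_clin T \<Longrightarrow> adj (adj T) = T"
  by (rule adj_eqI) (auto simp: bounded_clin_adj is_adjoint_def cinner_adj_left)

lemma adj_comp: "bounded_clin A \<Longrightarrow> bounded_clin B \<Longrightarrow> adj (A \<circ> B) = adj B \<circ> adj A"
  by (rule adj_eqI) (auto simp: bounded_clin_comp bounded_clin_adj is_adjoint_def cinner_adj_right)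

lemma adj_eq_self_if_orthogonal:
  assumes "bounded_clin P" and orth: "\<And>x y. cinner (P x) (y - P y) = 0"
  shows "adj P = P"
proof (rule adj_eqI[OF assms(1)])
  have "cinner (P x) y = cinner x (P y)" for x y
  proof -
    have "cinner (P x) y = cinner (P x) (P y)"
      using orth[of x y] by (simp add: cinner_diff_right)
    moreover have "cinner x (P y) = cinner (P x) (P y)"
      using orth[of y x] cinner_eq_0_commute[of "P y" "x - P x"] by (simp add: cinner_diff_left)
    ultimately show ?thesis
      by simp
  qed
  then show "is_adjoint P P"
    by (simp add: is_adjoint_def)
qed

section \<open>Bounded inverse on a closed range\<close>

lemma closure_image_cball_contains_ball:
  fixes T :: "'a::real_normed_vector \<Rightarrow> 'b::banach"
  assumes T: "bounded_linear T" and closed: "closed (range T)"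
  shows "\<exists>n::nat. \<exists>y0 r. r > 0 \<and> y0 \<in> range T \<and> ball y0 r \<inter> range T \<subseteq> closure (T ` cball 0 n)"
proof -
  define Y where "Y = range T"
  define F where "F n = closure (T ` cball 0 (real n))" for n :: nat
  have FY: "F n \<subseteq> Y" for n
    unfolding F_def using closed by (intro closure_minimal) (auto simp: Y_def)
  have UY: "(\<Union>n. F n) = Y"
  proof
    show "Y \<subseteq> (\<Union>n. F n)"
    proof
      fix y
      assume "y \<in> Y"
      then obtain x where "y = T x"
        by (auto simp: Y_def)
      moreover obtain n :: nat where "norm x \<le> n"
        using real_arch_simple by blast
      ultimately show "y \<in> (\<Union>n. F n)"
        unfolding F_def using closure_subset by fastforce
    qed
  qed (use FY in blast)
  have closedin: "closedin (top_of_set Y) (F n)" for n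
    by (rule closed_subset[OF FY]) (simp add: F_def)
  have "\<exists>n. top_of_set Y interior_of F n \<noteq> {}"
  proof (rule ccontr)
    assume "\<not> (\<exists>n. top_of_set Y interior_of F n \<noteq> {})"
    moreover have "completely_metrizable_space (top_of_set Y)"
      using closed unfolding Y_def closed_closedin
      by (rule completely_metrizable_space_closedin[OF completely_metrizable_space_euclidean])
    ultimately have "top_of_set Y interior_of (\<Union>(range F)) = {}"
      using closedin by (intro Baire_category_alt) auto
    moreover have "T 0 \<in> Y"
      by (simp add: Y_def)
    ultimately show False
      using UY interior_of_topspace[of "top_of_set Y"] by auto
  qed
  then obtain n y0 where y0: "y0 \<in> top_of_set Y interior_of F n"
    by blast
  moreover have "openin (top_of_set Y) (top_of_set Y interior_of F n)"
    by (rule openin_interior_of)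
  ultimately obtain r where "r > 0" "ball y0 r \<inter> Y \<subseteq> top_of_set Y interior_of F n"
    unfolding openin_contains_ball by blast
  moreover have "top_of_set Y interior_of F n \<subseteq> F n"
    by (rule interior_of_subset)
  ultimately have "ball y0 r \<inter> Y \<subseteq> F n" "y0 \<in> Y"
    using y0 FY by blast+
  with \<open>r > 0\<close> show ?thesis
    unfolding Y_def F_def by blast
qed

lemma closed_range_approx_preimage_near_0:
  fixes T :: "'a::real_normed_vector \<Rightarrow> 'b::banach"
  assumes T: "bounded_linear T" and "closed (range T)"
  obtains r C where "r > 0"
    and "\<And>y e. y \<in> range T \<Longrightarrow> norm y < r \<Longrightarrow> e > 0 \<Longrightarrow> \<exists>x. norm x \<le> C \<and> norm (T x - y) < e"
proof -
  interpret T: bounded_linear T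
    by (rule T)
  obtain n :: nat and y0 r where "r > 0" "y0 \<in> range T"
    and ball: "ball y0 r \<inter> range T \<subseteq> closure (T ` cball 0 n)"
    using closure_image_cball_contains_ball[OF assms] by blast
  have "\<exists>x. norm x \<le> 2 * n \<and> norm (T x - y) < e"
    if "y \<in> range T" "norm y < r" "e > 0" for y e
  proof -
    have "y0 + y \<in> range T"
      using \<open>y0 \<in> range T\<close> \<open>y \<in> range T\<close> by (auto simp flip: T.add)
    moreover have "y0 + y \<in> ball y0 r" "y0 \<in> ball y0 r"
      using \<open>r > 0\<close> \<open>norm y < r\<close> by (auto simp: dist_norm)
    ultimately have "y0 + y \<in> closure (T ` cball 0 n)" "y0 \<in> closure (T ` cball 0 n)"
      using ball \<open>y0 \<in> range T\<close> by blast+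
    then have "\<exists>z \<in> T ` cball 0 n. dist z (y0 + y) < e / 2" "\<exists>z \<in> T ` cball 0 n. dist z y0 < e / 2"
      using half_gt_zero[OF \<open>e > 0\<close>] unfolding closure_approachable by blast+
    then obtain x1 x2 where x12: "x1 \<in> cball 0 n" "x2 \<in> cball 0 n"
      and "dist (T x1) (y0 + y) < e / 2" "dist (T x2) y0 < e / 2"
      by blast
    then have "norm ((T x1 - (y0 + y)) - (T x2 - y0)) < e"
      using norm_triangle_ineq4[of "T x1 - (y0 + y)" "T x2 - y0"] by (simp add: dist_norm)
    moreover have "(T x1 - (y0 + y)) - (T x2 - y0) = T (x1 - x2) - y"
      by (simp add: T.diff algebra_simps)
    moreover have "norm (x1 - x2) \<le> 2 * n"
      using x12 norm_triangle_ineq4[of x1 x2] by simp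
    ultimately show ?thesis
      by metis
  qed
  then show ?thesis
    using that \<open>r > 0\<close> by blast
qed

lemma closed_range_approx_preimage:
  fixes T :: "'a::real_normed_vector \<Rightarrow> 'b::banach"
  assumes T: "bounded_linear T" and "closed (range T)"
  shows "\<exists>K \<ge> 0. \<forall>y\<in>range T. \<exists>x. norm x \<le> K * norm y \<and> norm (y - T x) \<le> norm y / 2"
proof -
  interpret T: bounded_linear T
    by (rule T)
  obtain r C where "r > 0"
    and near_0: "\<And>y e. y \<in> range T \<Longrightarrow> norm y < r \<Longrightarrow> e > 0 \<Longrightarrow> \<exists>x. norm x \<le> C \<and> norm (T x - y) < e"
    using closed_range_approx_preimage_near_0[OF assms] by metis
  have "0 \<in> range T"
    by (metis T.zero rangeI)
  then have "C \<ge> 0"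
    using near_0[of 0 1] \<open>r > 0\<close> by (auto intro: order_trans[OF norm_ge_zero])
  have "\<exists>x. norm x \<le> (2 * C / r) * norm y \<and> norm (y - T x) \<le> norm y / 2"
    if "y \<in> range T" for y
  proof (cases "y = 0")
    case False
    define s where "s = r / (2 * norm y)"
    have "s > 0"
      using \<open>r > 0\<close> False by (simp add: s_def)
    have "scaleR s y \<in> range T"
      using \<open>y \<in> range T\<close> by (auto simp flip: T.scaleR)
    moreover have "norm (scaleR s y) < r"
      using \<open>r > 0\<close> False by (simp add: s_def)
    ultimately obtain x where x: "norm x \<le> C" "norm (T x - scaleR s y) < s * norm y / 2"
      using near_0 \<open>s > 0\<close> False by (metis divide_pos_pos mult_pos_pos zero_less_norm_iff
          zero_less_numeral)
    have "y - T (scaleR (1 / s) x) = scaleR (1 / s) (scaleR s y - T x)"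
      using \<open>s > 0\<close> by (simp add: T.scaleR scaleR_diff_right)
    then have "norm (y - T (scaleR (1 / s) x)) = norm (T x - scaleR s y) / s"
      using \<open>s > 0\<close> by (simp add: norm_minus_commute)
    also have "\<dots> \<le> norm y / 2"
      using x(2) \<open>s > 0\<close> by (simp add: field_simps mult.commute)
    finally have "norm (y - T (scaleR (1 / s) x)) \<le> norm y / 2" .
    moreover have "norm (scaleR (1 / s) x) \<le> (2 * C / r) * norm y"
      using x(1) \<open>s > 0\<close> \<open>r > 0\<close> False by (simp add: s_def field_simps)
    ultimately show ?thesis
      by blast
  qed (auto intro: exI[of _ 0])
  then show ?thesis
    using \<open>C \<ge> 0\<close> \<open>r > 0\<close> by (intro exI[of _ "2 * C / r"]) auto
qed

lemma bounded_preimage_from_approx: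
  fixes T :: "'a::banach \<Rightarrow> 'b::real_normed_vector"
  assumes T: "bounded_linear T" and "K \<ge> 0"
    and approx: "\<And>y. y \<in> range T \<Longrightarrow> \<exists>x. norm x \<le> K * norm y \<and> norm (y - T x) \<le> norm y / 2"
    and "y \<in> range T"
  shows "\<exists>x. T x = y \<and> norm x \<le> 2 * K * norm y"
proof -
  interpret T: bounded_linear T
    by (rule T)
  obtain g where g: "\<And>y. y \<in> range T \<Longrightarrow> norm (g y) \<le> K * norm y \<and> norm (y - T (g y)) \<le> norm y / 2"
    using approx by metis
  \<comment> \<open>successive approximation: \<open>ys k\<close> is the k-th residual and \<open>xs k\<close> the
    correction that at least halves it\<close>
  define ys where "ys k = ((\<lambda>z. z - T (g z)) ^^ k) y" for k
  define xs where "xs k = g (ys k)" for k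
  have ys_Suc: "ys (Suc k) = ys k - T (xs k)" for k
    by (simp add: ys_def xs_def)
  have ys: "ys k \<in> range T \<and> norm (ys k) \<le> norm y / 2 ^ k" for k
  proof (induction k)
    case (Suc k)
    then have "ys (Suc k) \<in> range T"
      by (auto simp: ys_Suc simp flip: T.diff)
    moreover have "norm (ys (Suc k)) \<le> norm (ys k) / 2"
      using g Suc by (simp add: ys_Suc xs_def)
    ultimately show ?case
      using Suc by (simp add: divide_right_mono)
  qed (simp add: ys_def \<open>y \<in> range T\<close>)
  have xs: "norm (xs k) \<le> K * norm y * (1/2) ^ k" for k
  proof -
    have "norm (xs k) \<le> K * norm (ys k)"
      using g ys by (simp add: xs_def)
    also have "\<dots> \<le> K * (norm y / 2 ^ k)"
      using ys \<open>K \<ge> 0\<close> by (intro mult_left_mono) auto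
    finally show ?thesis
      by (simp add: power_one_over field_simps)
  qed
  have geometric: "summable (\<lambda>k. K * norm y * (1/2::real) ^ k)"
    by (intro summable_mult summable_geometric) simp
  have "summable (\<lambda>k. norm (xs k))"
    by (rule summable_comparison_test[OF _ geometric]) (use xs in auto)
  then have "summable xs"
    by (rule summable_norm_cancel)
  have "(\<lambda>k. T (xs k)) sums y"
  proof -
    have "(\<Sum>k<N. T (xs k)) = y - ys N" for N
      using sum_lessThan_telescope'[of ys N] by (simp add: ys_Suc) (simp add: ys_def)
    moreover have "ys \<longlonglongrightarrow> 0"
    proof (rule tendsto_norm_zero_cancel, rule Lim_null_comparison)
      show "\<forall>\<^sub>F k in sequentially. norm (norm (ys k)) \<le> norm y * (1/2) ^ k"
        using ys by (simp add: power_one_over field_simps)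
      show "(\<lambda>k. norm y * (1/2::real) ^ k) \<longlonglongrightarrow> 0"
        by (intro tendsto_mult_right_zero LIMSEQ_power_zero) simp
    qed
    then have "(\<lambda>N. y - ys N) \<longlonglongrightarrow> y"
      using tendsto_diff[OF tendsto_const, of ys 0 sequentially y] by simp
    ultimately show ?thesis
      unfolding sums_def by simp
  qed
  moreover have "T (suminf xs) = (\<Sum>k. T (xs k))"
    by (rule T.suminf[OF \<open>summable xs\<close>])
  moreover have "norm (suminf xs) \<le> 2 * K * norm y"
  proof -
    have "norm (suminf xs) \<le> (\<Sum>k. norm (xs k))"
      by (rule summable_norm[OF \<open>summable (\<lambda>k. norm (xs k))\<close>])
    also have "\<dots> \<le> (\<Sum>k. K * norm y * (1/2::real) ^ k)"
      by (rule suminf_le[OF xs \<open>summable (\<lambda>k. norm (xs k))\<close> geometric])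
    also have "\<dots> = 2 * K * norm y"
      using suminf_geometric[of "1/2::real"] suminf_mult[of "\<lambda>k. (1/2::real) ^ k" "K * norm y"]
      by (simp add: summable_geometric)
    finally show ?thesis .
  qed
  ultimately show ?thesis
    using sums_unique by metis
qed

lemma closed_range_bounded_preimage:
  fixes T :: "'a::banach \<Rightarrow> 'b::banach"
  assumes "bounded_linear T" "closed (range T)"
  obtains C where "C \<ge> 0" and "\<And>y. y \<in> range T \<Longrightarrow> \<exists>x. T x = y \<and> norm x \<le> C * norm y"
proof -
  obtain K where "K \<ge> 0"
    and "\<forall>y\<in>range T. \<exists>x. norm x \<le> K * norm y \<and> norm (y - T x) \<le> norm y / 2"
    using closed_range_approx_preimage[OF assms] by blast
  then have "\<exists>x. T x = y \<and> norm x \<le> 2 * K * norm y" if "y \<in> range T" for y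
    using bounded_preimage_from_approx[OF assms(1) \<open>K \<ge> 0\<close>] that by blast
  then show ?thesis
    using that[of "2 * K"] \<open>K \<ge> 0\<close> by simp
qed

section \<open>The Moore--Penrose inverse\<close>

definition mp_inverse :: "('a::chilbert \<Rightarrow> 'a) \<Rightarrow> ('a \<Rightarrow> 'a) \<Rightarrow> bool" where
  "mp_inverse T S \<longleftrightarrow> bounded_clin S \<and> T \<circ> S \<circ> T = T \<and> S \<circ> T \<circ> S = S
      \<and> adj (S \<circ> T) = S \<circ> T \<and> adj (T \<circ> S) = T \<circ> S"

locale mp_pair =
  fixes T S :: "'a::chilbert \<Rightarrow> 'a"
  assumes bounded: "bounded_clin T" and mp_inverse: "mp_inverse T S"
begin

lemma bounded_inverse: "bounded_clin S"
  using mp_inverse by (simp add: mp_inverse_def)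

lemma T_S_T [simp]: "T (S (T x)) = T x"
  using mp_inverse by (simp add: mp_inverse_def fun_eq_iff)

lemma S_T_S [simp]: "S (T (S x)) = S x"
  using mp_inverse by (simp add: mp_inverse_def fun_eq_iff)

lemma adj_S_adj_T: "adj S (adj T x) = T (S x)"
  using mp_inverse adj_comp[OF bounded bounded_inverse] by (simp add: mp_inverse_def fun_eq_iff)

lemma adj_T_adj_S: "adj T (adj S x) = S (T x)"
  using mp_inverse adj_comp[OF bounded_inverse bounded] by (simp add: mp_inverse_def fun_eq_iff)

lemma adj_T_adj_S_adj_T: "adj T (adj S (adj T x)) = adj T x"
proof -
  have "adj T = adj (T \<circ> S \<circ> T)"
    using mp_inverse by (simp add: mp_inverse_def)
  also have "\<dots> = adj T \<circ> adj S \<circ> adj T"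
    by (simp add: adj_comp bounded_clin_comp bounded bounded_inverse o_assoc)
  finally show ?thesis
    by (metis comp_apply)
qed

lemma S_T_adj_T [simp]: "S (T (adj T x)) = adj T x"
  by (metis adj_T_adj_S adj_T_adj_S_adj_T)

lemma mp_inverse_unique:
  assumes "mp_inverse T S'"
  shows "S' = S"
proof -
  interpret S': mp_pair T S'
    using bounded assms by unfold_locales
  have TS: "T (S' x) = T (S x)" for x
  proof -
    have "T (S' x) = adj S' (adj T x)"
      by (rule S'.adj_S_adj_T[symmetric])
    also have "\<dots> = adj S' (adj T (adj S (adj T x)))"
      by (simp only: adj_T_adj_S_adj_T)
    also have "\<dots> = T (S' (T (S x)))"
      by (simp only: adj_S_adj_T S'.adj_S_adj_T)
    finally show ?thesis
      by simp
  qed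
  have ST: "S' (T x) = S (T x)" for x
  proof -
    have "S' (T x) = adj T (adj S' x)"
      by (rule S'.adj_T_adj_S[symmetric])
    also have "\<dots> = adj T (adj S (adj T (adj S' x)))"
      by (simp only: adj_T_adj_S_adj_T)
    also have "\<dots> = S (T (S' (T x)))"
      by (simp only: adj_T_adj_S S'.adj_T_adj_S)
    finally show ?thesis
      by simp
  qed
  show ?thesis
  proof
    fix x
    have "S' x = S' (T (S' x))"
      by simp
    also have "\<dots> = S (T (S x))"
      by (simp only: TS ST)
    finally show "S' x = S x"
      by simp
  qed
qed

end

lemma mp_inv_eqI:
  assumes "bounded_clin T" "mp_inverse T S"
  shows "mp_inv T = S"
  unfolding mp_inv_def mp_inverse_def[symmetric]
  by (rule the_equality) (use assms mp_pair.mp_inverse_unique[OF mp_pair.intro[OF assms]] in blast)+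

locale closed_range_operator =
  fixes T :: "'a::chilbert \<Rightarrow> 'a"
  assumes bounded: "bounded_clin T" and closed_range: "closed (range T)"
begin

lemma bounded_linear: "bounded_linear T"
  using bounded by (simp add: bounded_clin_def)

lemmas T_add = linear_simps(1)[OF bounded_linear]
  and T_diff = linear_simps(2)[OF bounded_linear]
  and T_zero = linear_simps(3)[OF bounded_linear]
  and T_scaleC = bounded_clin_scaleC[OF bounded]

lemma closed_kernel: "closed {x. T x = 0}"
  by (intro closed_Collect_eq continuous_intros linear_continuous_on bounded_linear)

lemma csubspace_kernel: "csubspace {x. T x = 0}"
  by (simp add: csubspace_def T_add T_zero T_scaleC)

lemma csubspace_range: "csubspace (range T)"
  unfolding csubspace_def
proof (intro conjI ballI allI)
  show "0 \<in> range T"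
    using rangeI[of T 0] by (simp add: T_zero)
qed (auto simp flip: T_add T_scaleC)

(* x is the minimal-norm least-squares solution of T x = y *)
definition mp_solution :: "'a \<Rightarrow> 'a \<Rightarrow> bool" where
  "mp_solution y x \<longleftrightarrow> (\<forall>k. T k = 0 \<longrightarrow> cinner k x = 0) \<and> (\<forall>r\<in>range T. cinner r (y - T x) = 0)"

lemma mp_solution_unique:
  assumes "mp_solution y x1" "mp_solution y x2"
  shows "x1 = x2"
proof -
  have "T (x1 - x2) = (y - T x2) - (y - T x1)"
    by (simp add: T_diff)
  moreover have "cinner (T (x1 - x2)) (y - T x2) = 0" "cinner (T (x1 - x2)) (y - T x1) = 0"
    using assms unfolding mp_solution_def by blast+
  ultimately have "T (x1 - x2) = 0"
    by (metis cinner_diff_right cinner_self_eq_0 diff_self)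
  then have "cinner (x1 - x2) x1 = 0" "cinner (x1 - x2) x2 = 0"
    using assms unfolding mp_solution_def by blast+
  then show ?thesis
    using cinner_self_eq_0[of "x1 - x2"] by (simp add: cinner_diff_right)
qed

lemma mp_solution_exists:
  obtains C where "\<And>y. \<exists>x. mp_solution y x \<and> norm x \<le> C * norm y"
proof -
  obtain C where "C \<ge> 0" and preimage: "\<And>y. y \<in> range T \<Longrightarrow> \<exists>x. T x = y \<and> norm x \<le> C * norm y"
    using closed_range_bounded_preimage[OF bounded_linear closed_range] by blast
  have "\<exists>x. mp_solution y x \<and> norm x \<le> C * norm y" for y
  proof -
    obtain m where "m \<in> range T" and m: "\<And>r. r \<in> range T \<Longrightarrow> cinner r (y - m) = 0"
      using orthogonal_projection_exists[OF closed_range csubspace_range] by blast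
    obtain x where "T x = m" "norm x \<le> C * norm m"
      using preimage[OF \<open>m \<in> range T\<close>] by blast
    obtain p where "T p = 0" and p: "\<And>k. T k = 0 \<Longrightarrow> cinner k (x - p) = 0"
      using orthogonal_projection_exists[OF closed_kernel csubspace_kernel, of x] by blast
    have "mp_solution y (x - p)"
      unfolding mp_solution_def using p m \<open>T x = m\<close> \<open>T p = 0\<close> by (simp add: T_diff)
    moreover have "norm (x - p) \<le> norm x"
      using norm_le_norm_add_if_orthogonal[of "x - p" p] p[OF \<open>T p = 0\<close>]
      by (simp add: cinner_eq_0_commute)
    moreover have "norm m \<le> norm y"
      using norm_le_norm_add_if_orthogonal[of m "y - m"] m[OF \<open>m \<in> range T\<close>] by simp
    ultimately show ?thesis
      using \<open>norm x \<le> C * norm m\<close> \<open>C \<ge> 0\<close> by (meson mult_left_mono order_trans)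
  qed
  then show ?thesis
    using that by blast
qed

definition mp_sol :: "'a \<Rightarrow> 'a" where
  "mp_sol y = (SOME x. mp_solution y x)"

lemma mp_solution_mp_sol: "mp_solution y (mp_sol y)"
  unfolding mp_sol_def by (rule someI_ex) (meson mp_solution_exists)

lemma mp_sol_eqI: "mp_solution y x \<Longrightarrow> mp_sol y = x"
  using mp_solution_mp_sol mp_solution_unique by blast

lemma bounded_clin_mp_sol: "bounded_clin mp_sol"
proof -
  obtain C where C: "\<And>y. \<exists>x. mp_solution y x \<and> norm x \<le> C * norm y"
    using mp_solution_exists by blast
  show ?thesis
  proof (rule bounded_clinI[where K = C])
    show "mp_sol (a + b) = mp_sol a + mp_sol b" for a b
    proof (rule mp_sol_eqI)
      have eq: "a + b - T (mp_sol a + mp_sol b) = (a - T (mp_sol a)) + (b - T (mp_sol b))"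
        by (simp add: T_add)
      show "mp_solution (a + b) (mp_sol a + mp_sol b)"
        using mp_solution_mp_sol[of a] mp_solution_mp_sol[of b]
        unfolding mp_solution_def eq by (simp add: cinner_add_right)
    qed
    show "mp_sol (scaleC c a) = scaleC c (mp_sol a)" for c a
    proof (rule mp_sol_eqI)
      have eq: "scaleC c a - T (scaleC c (mp_sol a)) = scaleC c (a - T (mp_sol a))"
        by (simp add: T_scaleC scaleC_diff_right)
      show "mp_solution (scaleC c a) (scaleC c (mp_sol a))"
        using mp_solution_mp_sol[of a]
        unfolding mp_solution_def eq by (simp add: cinner_scaleC_right)
    qed
    show "norm (mp_sol y) \<le> norm y * C" for y
      using C[of y] mp_sol_eqI by (auto simp: mult.commute)
  qed
qed

lemma T_mp_sol_T [simp]: "T (mp_sol (T x)) = T x"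
proof -
  have "T x - T (mp_sol (T x)) \<in> range T"
    by (metis T_diff rangeI)
  then have "cinner (T x - T (mp_sol (T x))) (T x - T (mp_sol (T x))) = 0"
    using mp_solution_mp_sol[of "T x"] unfolding mp_solution_def by blast
  then show ?thesis
    by simp
qed

lemma mp_sol_T_mp_sol [simp]: "mp_sol (T (mp_sol y)) = mp_sol y"
  using mp_solution_mp_sol[of y] by (intro mp_sol_eqI) (simp add: mp_solution_def)

lemma adj_mp_sol_T: "adj (mp_sol \<circ> T) = mp_sol \<circ> T"
proof (rule adj_eq_self_if_orthogonal)
  show "bounded_clin (mp_sol \<circ> T)"
    by (rule bounded_clin_comp[OF bounded_clin_mp_sol bounded])
  show "cinner ((mp_sol \<circ> T) x) (y - (mp_sol \<circ> T) y) = 0" for x y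
  proof -
    have "T (y - mp_sol (T y)) = 0"
      by (simp add: T_diff)
    then have "cinner (y - mp_sol (T y)) (mp_sol (T x)) = 0"
      using mp_solution_mp_sol[of "T x"] by (simp add: mp_solution_def)
    then show ?thesis
      by (simp add: cinner_eq_0_commute)
  qed
qed

lemma adj_T_mp_sol: "adj (T \<circ> mp_sol) = T \<circ> mp_sol"
proof (rule adj_eq_self_if_orthogonal)
  show "bounded_clin (T \<circ> mp_sol)"
    by (rule bounded_clin_comp[OF bounded bounded_clin_mp_sol])
  show "cinner ((T \<circ> mp_sol) x) (y - (T \<circ> mp_sol) y) = 0" for x y
    using mp_solution_mp_sol[of y] by (simp add: mp_solution_def)
qed

lemma mp_inverse_mp_sol: "mp_inverse T mp_sol"
  unfolding mp_inverse_def
  by (simp add: bounded_clin_mp_sol adj_mp_sol_T adj_T_mp_sol fun_eq_iff)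

end

lemma mp_inverse_mp_inv:
  assumes "bounded_clin T" "closed (range T)"
  shows "mp_inverse T (mp_inv T)"
proof -
  interpret closed_range_operator T
    using assms by unfold_locales
  show ?thesis
    using mp_inv_eqI[OF assms(1) mp_inverse_mp_sol] mp_inverse_mp_sol by simp
qed

section \<open>SD operators\<close>

lemma funpow_commute_apply: "(\<And>x. f (g x) = g (f x)) \<Longrightarrow> f ((g ^^ n) x) = (g ^^ n) (f x)"
  by (induction n) simp_all

locale sd_operator = mp_pair +
  assumes SD: "adj T \<circ> S = S \<circ> adj T"
begin

lemma adj_S_T_commute: "adj S (T x) = T (adj S x)"
proof -
  have "adj S \<circ> T = adj (adj T \<circ> S)"
    by (simp add: adj_comp bounded_clin_adj bounded bounded_inverse adj_adj)
  also have "\<dots> = adj (S \<circ> adj T)"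
    by (simp add: SD)
  also have "\<dots> = T \<circ> adj S"
    by (simp add: adj_comp bounded_clin_adj bounded bounded_inverse adj_adj)
  finally show ?thesis
    by (metis comp_apply)
qed

lemma adj_S_funpow_T_commute: "adj S ((T ^^ n) x) = (T ^^ n) (adj S x)"
  by (rule funpow_commute_apply[of "adj S" T]) (rule adj_S_T_commute)

lemma T_adj_T_funpow_T_S: "T (adj T ((T ^^ n) (T (S x)))) = (T ^^ Suc n) (adj T x)"
proof -
  have "T (adj T ((T ^^ n) (T (S x)))) = T (adj T ((T ^^ n) (adj S (adj T x))))"
    by (simp add: adj_S_adj_T)
  also have "\<dots> = T (adj T (adj S ((T ^^ n) (adj T x))))"
    by (simp add: adj_S_funpow_T_commute)
  also have "\<dots> = T ((T ^^ n) (adj T x))"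
    by (simp add: adj_T_adj_S)
  also have "\<dots> = (T ^^ Suc n) (adj T x)"
    by simp
  finally show ?thesis .
qed

lemma n_normal_if_n_EP:
  assumes "n \<ge> 1" and EP: "(T ^^ n) \<circ> S = S \<circ> (T ^^ n)"
  shows "(T ^^ n) \<circ> adj T = adj T \<circ> (T ^^ n)"
proof
  fix x
  have EP': "(T ^^ n) (S y) = S ((T ^^ n) y)" for y
    using EP by (metis comp_apply)
  have absorb: "(T ^^ n) (T (S y)) = (T ^^ n) y" for y
  proof -
    obtain k where "n = Suc k"
      using \<open>n \<ge> 1\<close> by (cases n) auto
    have "(T ^^ n) (T (S y)) = T (S ((T ^^ n) y))"
      by (simp add: funpow_swap1 EP'[symmetric])
    also have "\<dots> = (T ^^ n) y"
      by (simp add: \<open>n = Suc k\<close>)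
    finally show ?thesis .
  qed
  have "adj T ((T ^^ n) x) = S (T (adj T ((T ^^ n) (T (S x)))))"
    by (simp add: absorb)
  also have "\<dots> = S ((T ^^ n) (T (adj T x)))"
    by (simp add: T_adj_T_funpow_T_S funpow_swap1)
  also have "\<dots> = (T ^^ n) (adj T x)"
    by (simp add: EP'[symmetric])
  finally show "((T ^^ n) \<circ> adj T) x = (adj T \<circ> (T ^^ n)) x"
    by simp
qed

lemma n_EP_if_n_normal:
  assumes normal: "(T ^^ n) \<circ> adj T = adj T \<circ> (T ^^ n)"
  shows "(T ^^ n) \<circ> S = S \<circ> (T ^^ n)"
proof
  fix x
  have normal': "(T ^^ n) (adj T y) = adj T ((T ^^ n) y)" for y
    using normal by (metis comp_apply)
  have "(T ^^ n) (S x) = (T ^^ n) (adj T (adj S (S x)))"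
    by (metis adj_T_adj_S S_T_S)
  also have "\<dots> = adj T (adj S ((T ^^ n) (S x)))"
    by (simp only: normal' adj_S_funpow_T_commute)
  also have "\<dots> = S (T ((T ^^ n) (S x)))"
    by (rule adj_T_adj_S)
  also have "\<dots> = S ((T ^^ n) (T (S x)))"
    by (simp add: funpow_swap1)
  also have "\<dots> = S ((T ^^ n) (adj S (adj T x)))"
    by (simp add: adj_S_adj_T)
  also have "\<dots> = S (adj S (adj T ((T ^^ n) x)))"
    by (simp only: normal' adj_S_funpow_T_commute[symmetric])
  also have "\<dots> = S ((T ^^ n) x)"
    by (metis adj_S_adj_T S_T_S)
  finally show "((T ^^ n) \<circ> S) x = (S \<circ> (T ^^ n)) x"
    by simp
qed

end

theorem mainTheorem10:
  fixes T :: "'a::chilbert \<Rightarrow> 'a" and n :: nat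
  assumes "bounded_clin T" and "SD T" and "n \<ge> 1"
  shows "n_EP n T \<longleftrightarrow> n_normal n T"
proof -
  have "closed (range T)"
    using assms(2) by (simp add: SD_def)
  interpret sd_operator T "mp_inv T"
    using assms(1,2) mp_inverse_mp_inv[OF assms(1) \<open>closed (range T)\<close>]
    by unfold_locales (simp_all add: SD_def)
  show ?thesis
    unfolding n_EP_def n_normal_def
    using n_normal_if_n_EP[OF assms(3)] n_EP_if_n_normal \<open>closed (range T)\<close> by blast
qed

end
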